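(* Let $N\ge 1$, $\varepsilon>0$, $T>0$, and let $\mathbf{A}:\mathbb{R}^N\to\mathbb{R}^N$ and $U:\mathbb{R}^N\to\mathbb{R}$ be smooth. Let $\psi(\mathbf{x},t)$ be a smooth solution on $\mathbb{R}^N\times[0,T]$ of \[ i\varepsilon\,\partial_t\psi=-\frac{\varepsilon^2}{2}\Delta_{\mathbf{x}}\psi+i\varepsilon\,\mathbf{A}(\mathbf{x})\cdot\nabla_{\mathbf{x}}\psi+U(\mathbf{x})\psi . \] Let $\bm q(t),\bm p(t)\in\mathbb{R}^N$, a complex symmetric matrix $\bm\alpha(t)=\bm\alpha_R(t)+i\bm\alpha_I(t)$ (with $\bm\alpha_R,\bm\alpha_I$ real symmetric), $\gamma_2(t)\in\mathbb{C}$ and a real $N\times N$ matrix $\bm B(t)$ be smooth functions on $[0,T]$ satisfying \[ \begin{aligned} \dot{\bm q}&=\bm p-\mathbf{A}(\bm q),\qquad \dot{\bm p}=\nabla\mathbf{A}(\bm q)^T\bm p-\nabla U(\bm q),\\ \dot{\bm\alpha}&=-2\bm\alpha^2-\tfrac12\nabla\nabla U(\bm q)+\nabla\mathbf{A}(\bm q)^T\bm\alpha+\bm\alpha\nabla\mathbf{A}(\bm q)+\tfrac12\nabla\nabla\mathbf{A}(\bm q)\cdot\bm p,\\ \dot\gamma_2&=\tfrac12|\bm p|^2-U(\bm q)+i\varepsilon\,\mathrm{Tr}(\bm\alpha_R),\qquad \dot{\bm B}=-2\bm B\bm\alpha_R+\bm B\nabla\mathbf{A}(\bm q), \end{aligned}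 \] with $\bm\alpha_I(0)$ positive definite, $\bm B(0)=\sqrt{\bm\alpha_I(0)}$, and assume $\bm B(t)$ is invertible for all $t\in[0,T]$. Writing $\bm\xi=\mathbf{x}-\bm q(t)$, define $w$ on $\mathbb{R}^N\times[0,T]$ by \[ \psi(\mathbf{x},t)=w\!\left(\bm B(t)\bm\xi/\sqrt{\varepsilon},\,t\right)\exp\!\left(\frac{i}{\varepsilon}\left(\bm\xi^T\bm\alpha_R\bm\xi+\bm p^T\bm\xi+\gamma_2\right)\right), \] i.e. $w(\bm\eta,t)=\psi(\bm q+\sqrt\varepsilon\bm B^{-1}\bm\eta,t)\exp(-\frac{i}{\varepsilon}(\bm\xi^T\bm\alpha_R\bm\xi+\bm p^T\bm\xi+\gamma_2))$ with $\bm\xi=\sqrt\varepsilon\bm B^{-1}\bm\eta$. Then $w$ satisfies, with $\bm\xi=\sqrt{\varepsilon}\bm B^{-1}\bm\eta$, \[ w_t=\frac{i}{2}\mathrm{Tr}\!\left(\bm B^T\nabla_{\bm\eta}\nabla_{\bm\eta}w\,\bm B\right)-2i\,\bm\eta^T(\bm B^T)^{-1}\bm\alpha_I^2\bm B^{-1}\bm\eta\,w+\frac{1}{\sqrt\varepsilon}\nabla_{\bm\eta}w^T\bm B\mathbf{A}_{(1)}+\frac{1}{i\varepsilon}\left(U_r-2\sqrt\varepsilon\,\mathbf{A}_{(1)}^T\bm\alpha_R\bm B^{-1}\bm\eta-\mathbf{A}_r^T\bm p\right)w, \] where $\mathbf{A}_{(1)},\mathbf{A}_r,U_r$ are evaluated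 at $\bm\xi=\sqrt\varepsilon\bm B^{-1}\bm\eta$ and time $t$.
   Context: Notation: $(\nabla\mathbf{A})_{jk}=\partial A_j/\partial x_k$, $(\nabla\nabla U)_{jk}=\partial^2U/\partial x_j\partial x_k$, $(\nabla\nabla\mathbf{A}\cdot\bm p)_{jk}=\sum_\ell \frac{\partial^2A_\ell}{\partial x_j\partial x_k}p_\ell$, all evaluated at $\bm q(t)$; $\nabla_{\bm\eta}\nabla_{\bm\eta}w$ is the Hessian of $w$ in $\bm\eta$. The remainders are defined by $\mathbf{A}_{(1)}=\mathbf{A}(\bm\xi+\bm q)-\mathbf{A}(\bm q)-\nabla\mathbf{A}(\bm q)\bm\xi$, $\mathbf{A}_r=\mathbf{A}_{(1)}-\mathbf{A}_q$ where $(\mathbf{A}_q)_j=\frac12\sum_{\ell,\ell'}\frac{\partial^2A_j(\bm q)}{\partial x_\ell\partial x_{\ell'}}\xi_\ell\xi_{\ell'}$, and $U_r=U(\bm\xi+\bm q)-U(\bm q)-\bm\xi^T\nabla U(\bm q)-\frac12\bm\xi^T\nabla\nabla U(\bm q)\bm\xi$. $\sqrt{\bm\alpha_I(0)}$ is the positive definite square root. *)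

theory Defs
  imports "HOL-Analysis.Analysis"
begin

definition pd_within :: "'a::euclidean_space set \<Rightarrow> 'a \<Rightarrow> ('a \<Rightarrow> 'b::real_normed_vector) \<Rightarrow> 'a \<Rightarrow> 'b" where
  "pd_within S v f x = frechet_derivative f (at x within S) v"

fun iter_pd :: "'a::euclidean_space set \<Rightarrow> 'a list \<Rightarrow> ('a \<Rightarrow> 'b::real_normed_vector) \<Rightarrow> 'a \<Rightarrow> 'b" where
  "iter_pd S [] f = f"
| "iter_pd S (v # vs) f = pd_within S v (iter_pd S vs f)"

definition C_inf_on :: "'a::euclidean_space set \<Rightarrow> ('a \<Rightarrow> 'b::real_normed_vector) \<Rightarrow> bool" where
  "C_inf_on S f \<longleftrightarrow> (\<forall>vs. set vs \<subseteq> Basis \<longrightarrow> iter_pd S vs f differentiable_on S)"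

definition pdx :: "'n::finite \<Rightarrow> (real^'n \<Rightarrow> 'b::real_normed_vector) \<Rightarrow> real^'n \<Rightarrow> 'b" where
  "pdx j f x = frechet_derivative f (at x) (axis j 1)"

definition grad :: "(real^'n \<Rightarrow> real) \<Rightarrow> real^'n \<Rightarrow> real^'n" where
  "grad U x = (\<chi> j. pdx j U x)"

definition jac :: "(real^'n \<Rightarrow> real^'n) \<Rightarrow> real^'n \<Rightarrow> real^'n^'n" where
  "jac A x = (\<chi> j k. pdx k (\<lambda>y. A y $ j) x)"

definition hess :: "(real^'n \<Rightarrow> 'b::real_normed_vector) \<Rightarrow> real^'n \<Rightarrow> 'b^'n^'n" where
  "hess f x = (\<chi> j k. pdx j (pdx k f) x)"

definition hessA_dot :: "(real^'n \<Rightarrow> real^'n) \<Rightarrow> real^'n \<Rightarrow> real^'n \<Rightarrow> real^'n^'n" where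
  "hessA_dot A x p = (\<chi> j k. \<Sum>l\<in>UNIV. hess (\<lambda>y. A y $ l) x $ j $ k * p $ l)"

definition laplacian :: "(real^'n \<Rightarrow> complex) \<Rightarrow> real^'n \<Rightarrow> complex" where
  "laplacian f x = (\<Sum>j\<in>UNIV. pdx j (pdx j f) x)"

definition cmat :: "real^'n^'m \<Rightarrow> complex^'n^'m" where
  "cmat M = (\<chi> i j. complex_of_real (M $ i $ j))"

definition cvec :: "real^'n \<Rightarrow> complex^'n" where
  "cvec v = (\<chi> i. complex_of_real (v $ i))"

definition cplx_mat :: "real^'n^'m \<Rightarrow> real^'n^'m \<Rightarrow> complex^'n^'m" where
  "cplx_mat R I = (\<chi> i j. Complex (R $ i $ j) (I $ i $ j))"

definition symmetric_mat :: "'a^'n^'n \<Rightarrow> bool" where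
  "symmetric_mat M \<longleftrightarrow> transpose M = M"

definition pos_def :: "real^'n^'n \<Rightarrow> bool" where
  "pos_def M \<longleftrightarrow> symmetric_mat M \<and> (\<forall>v. v \<noteq> 0 \<longrightarrow> v \<bullet> (M *v v) > 0)"

definition pos_sqrt :: "real^'n^'n \<Rightarrow> real^'n^'n" where
  "pos_sqrt M = (THE S. pos_def S \<and> S ** S = M)"

definition A1 :: "(real^'n \<Rightarrow> real^'n) \<Rightarrow> real^'n \<Rightarrow> real^'n \<Rightarrow> real^'n" where
  "A1 A q \<xi> = A (\<xi> + q) - A q - jac A q *v \<xi>"

definition Aq :: "(real^'n \<Rightarrow> real^'n) \<Rightarrow> real^'n \<Rightarrow> real^'n \<Rightarrow> real^'n" where
  "Aq A q \<xi> = (\<chi> j. (1/2) * (\<Sum>l\<in>UNIV. \<Sum>l'\<in>UNIV. hess (\<lambda>y. A y $ j) q $ l $ l' * \<xi> $ l * \<xi> $ l'))"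

definition Ar :: "(real^'n \<Rightarrow> real^'n) \<Rightarrow> real^'n \<Rightarrow> real^'n \<Rightarrow> real^'n" where
  "Ar A q \<xi> = A1 A q \<xi> - Aq A q \<xi>"

definition Ur :: "(real^'n \<Rightarrow> real) \<Rightarrow> real^'n \<Rightarrow> real^'n \<Rightarrow> real" where
  "Ur U q \<xi> = U (\<xi> + q) - U q - \<xi> \<bullet> grad U q - (1/2) * (\<xi> \<bullet> (hess U q *v \<xi>))"

end

theory Submission
  imports Defs
begin

(* Write x = q + xi(t) with xi(t) = sqrt eps B(t)^-1 eta and w = psi e^(-i Phi/eps), where
   Phi = xi^T alpha_R xi + p^T xi + gamma_2.  In the variable eta the spatial derivatives of
   psi e^(-i Phi/eps) become B^T nabla w / sqrt eps and B^T (nabla nabla w) B / eps, and the time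
   derivative of w picks up the velocity p - A(q) + xi' of the moving point, where
   xi' = 2 alpha_R xi - nabla A xi by the equation for B.  Substituting the Schroedinger equation,
   everything reduces to one scalar identity for the phase: the real part of the Riccati equation
   and the equations for q, p and Re gamma_2 cancel the constant, linear and quadratic Taylor terms
   of U and A, leaving only U_r, A_r, A_(1) and the term -2 alpha_I^2 coming from -2 alpha^2. *)

section \<open>Partial derivatives in Euclidean space\<close>

lemma bounded_bilinear_matrix_vector_mult:
  "bounded_bilinear (\<lambda>(M::real^'n^'m) (v::real^'n). M *v v)"
proof -
  have "bilinear (\<lambda>(M::real^'n^'m) (v::real^'n). M *v v)"
    unfolding bilinear_def
    by (auto intro!: linearI simp: matrix_vector_mult_def vec_eq_iff algebra_simps sum.distrib
        sum_distrib_left matrix_vector_right_distrib)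
  then show ?thesis
    using bilinear_conv_bounded_bilinear by blast
qed

lemmas has_derivative_matrix_vector_mult =
  bounded_bilinear.FDERIV[OF bounded_bilinear_matrix_vector_mult]

lemma has_vector_derivative_matrix_vector_mult:
  fixes M :: "real \<Rightarrow> real^'n^'m" and X :: "real \<Rightarrow> real^'n"
  assumes "(M has_vector_derivative M') (at t within S)" "(X has_vector_derivative X') (at t within S)"
  shows "((\<lambda>s. M s *v X s) has_vector_derivative (M t *v X' + M' *v X t)) (at t within S)"
proof -
  have "((\<lambda>s. M s *v X s) has_derivative (\<lambda>h. M t *v (h *\<^sub>R X') + (h *\<^sub>R M') *v X t)) (at t within S)"
    using has_derivative_matrix_vector_mult[OF assms[unfolded has_vector_derivative_def]] .
  moreover have "(\<lambda>h. M t *v (h *\<^sub>R X') + (h *\<^sub>R M') *v X t) = (\<lambda>h. h *\<^sub>R (M t *v X' + M' *v X t))"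
    by (rule ext) (simp add: matrix_vector_mult_scaleR scaleR_matrix_vector_assoc[symmetric]
        scaleR_add_right)
  ultimately show ?thesis
    unfolding has_vector_derivative_def by simp
qed

lemma pdx_eq: "(f has_derivative f') (at x) \<Longrightarrow> pdx j f x = f' (axis j 1)"
  unfolding pdx_def using frechet_derivative_at by metis

lemma frechet_derivative_eq_sum_pdx:
  fixes f :: "real^'n \<Rightarrow> 'b::real_normed_vector"
  assumes "f differentiable at x"
  shows "frechet_derivative f (at x) v = (\<Sum>a\<in>UNIV. v $ a *\<^sub>R pdx a f x)"
proof -
  have lin: "linear (frechet_derivative f (at x))"
    using assms frechet_derivative_works has_derivative_linear by blast
  have "v = (\<Sum>a\<in>UNIV. v $ a *\<^sub>R axis a 1)"
    using basis_expansion[of v] by (simp add: scalar_mult_eq_scaleR)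
  then have "frechet_derivative f (at x) v
      = frechet_derivative f (at x) (\<Sum>a\<in>UNIV. v $ a *\<^sub>R axis a 1)"
    by simp
  also have "\<dots> = (\<Sum>a\<in>UNIV. v $ a *\<^sub>R frechet_derivative f (at x) (axis a 1))"
    using lin by (simp add: linear_sum linear_scale)
  finally show ?thesis
    by (simp add: pdx_def)
qed

lemma matrix_vector_mult_axis_nth: "((M::real^'n^'m) *v axis k 1) $ a = M $ a $ k"
  by (simp add: matrix_vector_mult_basis column_def)

lemma has_derivative_affine_comp:
  fixes G :: "real^'n \<Rightarrow> 'b::real_normed_vector" and M :: "real^'n^'n"
  assumes "G differentiable at (x0 + M *v z)"
  shows "((\<lambda>z. G (x0 + M *v z)) has_derivative
          (\<lambda>v. frechet_derivative G (at (x0 + M *v z)) (M *v v))) (at z)"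
proof -
  have 1: "((\<lambda>z. x0 + M *v z) has_derivative (\<lambda>v. M *v v)) (at z)"
    by (auto intro!: derivative_eq_intros
        bounded_linear.has_derivative[OF matrix_vector_mul_bounded_linear])
  have 2: "(G has_derivative frechet_derivative G (at (x0 + M *v z))) (at (x0 + M *v z))"
    using assms frechet_derivative_works by blast
  show ?thesis
    using diff_chain_at[OF 1 2] by (simp add: o_def)
qed

lemma pdx_affine_comp:
  fixes G :: "real^'n \<Rightarrow> 'b::real_normed_vector" and M :: "real^'n^'n"
  assumes "G differentiable at (x0 + M *v z)"
  shows "pdx k (\<lambda>z. G (x0 + M *v z)) z = (\<Sum>a\<in>UNIV. M $ a $ k *\<^sub>R pdx a G (x0 + M *v z))"
  using pdx_eq[OF has_derivative_affine_comp[OF assms]] frechet_derivative_eq_sum_pdx[OF assms]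
  by (simp add: matrix_vector_mult_axis_nth)

lemma hess_affine_comp:
  fixes W :: "real^'n \<Rightarrow> complex" and M :: "real^'n^'n"
  assumes dW: "\<And>y. W differentiable at y" and dW2: "\<And>a y. pdx a W differentiable at y"
  shows "hess (\<lambda>z. W (x0 + M *v z)) z = cmat (transpose M) ** hess W (x0 + M *v z) ** cmat M"
proof -
  have pdx1: "pdx k (\<lambda>z. W (x0 + M *v z)) = (\<lambda>z. \<Sum>a\<in>UNIV. M $ a $ k *\<^sub>R pdx a W (x0 + M *v z))" for k
    using pdx_affine_comp[OF dW] by blast
  have deriv: "((\<lambda>z. \<Sum>a\<in>UNIV. M $ a $ k *\<^sub>R pdx a W (x0 + M *v z)) has_derivative
     (\<lambda>v. \<Sum>a\<in>UNIV. M $ a $ k *\<^sub>R frechet_derivative (pdx a W) (at (x0 + M *v z)) (M *v v))) (at z)"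
    for k
    by (intro has_derivative_sum has_derivative_scaleR_right has_derivative_affine_comp dW2)
  have pdx2: "pdx j (pdx k (\<lambda>z. W (x0 + M *v z))) z
      = (\<Sum>a\<in>UNIV. M $ a $ k *\<^sub>R (\<Sum>b\<in>UNIV. M $ b $ j *\<^sub>R pdx b (pdx a W) (x0 + M *v z)))" for j k
    unfolding pdx1 pdx_eq[OF deriv] using frechet_derivative_eq_sum_pdx[OF dW2]
    by (simp add: matrix_vector_mult_axis_nth)
  show ?thesis
    unfolding hess_def
    by (simp add: vec_eq_iff pdx2 matrix_matrix_mult_def cmat_def transpose_def scaleR_conv_of_real
        sum_distrib_left sum_distrib_right mult.commute)
qed

lemma pdx_const: "pdx a (\<lambda>y::real^'n. c) y = 0"
  by (metis pdx_eq has_derivative_const)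

lemma pdx_add:
  fixes f h :: "real^'n \<Rightarrow> complex"
  assumes "f differentiable at y" "h differentiable at y"
  shows "pdx a (\<lambda>y. f y + h y) y = pdx a f y + pdx a h y"
proof -
  have "((\<lambda>y. f y + h y) has_derivative
      (\<lambda>v. frechet_derivative f (at y) v + frechet_derivative h (at y) v)) (at y)"
    using assms by (intro has_derivative_add) (auto simp: frechet_derivative_works)
  from pdx_eq[OF this] show ?thesis
    by (simp add: pdx_def)
qed

lemma pdx_mult:
  fixes f h :: "real^'n \<Rightarrow> complex"
  assumes "f differentiable at y" "h differentiable at y"
  shows "pdx a (\<lambda>y. f y * h y) y = pdx a f y * h y + f y * pdx a h y"
proof -
  have "((\<lambda>y. f y * h y) has_derivative
      (\<lambda>v. f y * frechet_derivative h (at y) v + frechet_derivative f (at y) v * h y)) (at y)"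
    using assms by (intro has_derivative_mult) (auto simp: frechet_derivative_works)
  from pdx_eq[OF this] show ?thesis
    by (simp add: pdx_def)
qed

lemma cmat_matrix_mult: "cmat ((M::real^'n^'m) ** (N::real^'k^'n)) = cmat M ** cmat N"
  by (simp add: vec_eq_iff cmat_def matrix_matrix_mult_def)

lemma trace_cmat_congruence:
  fixes M B :: "real^'n^'n" and H :: "complex^'n^'n"
  assumes "M ** B = c *\<^sub>R mat 1"
  shows "trace (cmat (transpose B) ** (cmat (transpose M) ** H ** cmat M) ** cmat B)
       = of_real (c * c) * trace H"
proof -
  have "cmat (transpose B) ** (cmat (transpose M) ** H ** cmat M) ** cmat B
      = cmat (transpose (M ** B)) ** H ** cmat (M ** B)"
    by (simp add: matrix_mul_assoc cmat_matrix_mult matrix_transpose_mul)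
  also have "\<dots> = cmat (c *\<^sub>R mat 1) ** H ** cmat (c *\<^sub>R mat 1)"
    using assms by (simp add: transpose_scalar)
  finally have congr: "cmat (transpose B) ** (cmat (transpose M) ** H ** cmat M) ** cmat B
      = cmat (c *\<^sub>R mat 1) ** H ** cmat (c *\<^sub>R mat 1)" .
  have diag: "cmat (c *\<^sub>R mat 1) $ i $ k = (if i = k then of_real c else 0)" for i k
    by (simp add: cmat_def mat_def)
  have "(cmat (c *\<^sub>R mat 1) ** H ** cmat (c *\<^sub>R mat 1)) $ i $ i = of_real c * H $ i $ i * of_real c"
    for i
  proof -
    have "x * (if P then a else 0) = (if P then x * a else 0)"
      "(if P then a else 0) * x = (if P then a * x else 0)" for x a :: complex and P
      by simp_all
    then show ?thesis
      unfolding matrix_matrix_mult_def by (simp add: diag sum.delta sum.delta')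
  qed
  then show ?thesis
    unfolding congr trace_def by (simp add: sum_distrib_left mult_ac)
qed

lemma sum_pdx_affine_pairing:
  fixes M :: "real^'n^'n" and G :: "'n \<Rightarrow> complex"
  shows "(\<Sum>j\<in>UNIV. (\<Sum>a\<in>UNIV. M $ a $ j *\<^sub>R G a) * of_real (v $ j))
       = (\<Sum>a\<in>UNIV. G a * of_real ((M *v v) $ a))"
proof -
  have "(\<Sum>j\<in>UNIV. (\<Sum>a\<in>UNIV. M $ a $ j *\<^sub>R G a) * of_real (v $ j))
      = (\<Sum>j\<in>UNIV. \<Sum>a\<in>UNIV. G a * (of_real (M $ a $ j) * of_real (v $ j)))"
    by (rule sum.cong[OF refl]) (simp add: scaleR_conv_of_real sum_distrib_right sum_distrib_left mult_ac)
  also have "\<dots> = (\<Sum>a\<in>UNIV. \<Sum>j\<in>UNIV. G a * (of_real (M $ a $ j) * of_real (v $ j)))"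
    by (rule sum.swap)
  also have "\<dots> = (\<Sum>a\<in>UNIV. G a * of_real ((M *v v) $ a))"
    by (simp add: matrix_vector_mult_def sum_distrib_left)
  finally show ?thesis .
qed

section \<open>Smooth functions and their slices\<close>

lemma C_inf_on_differentiable_on: "C_inf_on S f \<Longrightarrow> f differentiable_on S"
  unfolding C_inf_on_def by (drule spec[of _ "[]"]) simp

lemma C_inf_on_pd_within_differentiable_on:
  "C_inf_on S f \<Longrightarrow> v \<in> Basis \<Longrightarrow> pd_within S v f differentiable_on S"
  unfolding C_inf_on_def by (drule spec[of _ "[v]"]) simp

lemma C_inf_on_has_vector_derivative:
  fixes f :: "real \<Rightarrow> 'b::real_normed_vector"
  assumes "C_inf_on S f" "t \<in> S"
  shows "(f has_vector_derivative vector_derivative f (at t within S)) (at t within S)"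
  using C_inf_on_differentiable_on[OF assms(1)] assms(2) differentiable_on_def
    vector_derivative_works by blast

lemma has_derivative_space_slice:
  fixes F :: "(real^'n) \<times> real \<Rightarrow> 'b::real_normed_vector"
  assumes "F differentiable at (x, t) within (UNIV \<times> I)" "t \<in> I"
  shows "((\<lambda>y. F (y, t)) has_derivative
          (\<lambda>v. frechet_derivative F (at (x, t) within UNIV \<times> I) (v, 0))) (at x)"
proof -
  have 1: "((\<lambda>y. (y, t)) has_derivative (\<lambda>v. (v, 0))) (at x)"
    by (rule has_derivative_Pair[OF has_derivative_ident has_derivative_const])
  have 2: "(F has_derivative frechet_derivative F (at (x, t) within UNIV \<times> I))
      (at (x, t) within (\<lambda>y. (y, t)) ` UNIV)"
    by (rule has_derivative_subset[OF iffD1[OF frechet_derivative_works assms(1)]])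
      (use assms in auto)
  show ?thesis
    using diff_chain_within[OF 1 2] by (simp add: o_def)
qed

lemma has_vector_derivative_along_curve:
  fixes F :: "(real^'n) \<times> real \<Rightarrow> 'b::real_normed_vector"
  assumes "F differentiable at (X t, t) within (UNIV \<times> I)"
    and "(X has_vector_derivative X') (at t within I)"
  shows "((\<lambda>s. F (X s, s)) has_vector_derivative
          frechet_derivative F (at (X t, t) within UNIV \<times> I) (X', 1)) (at t within I)"
proof -
  let ?D = "frechet_derivative F (at (X t, t) within UNIV \<times> I)"
  have 1: "((\<lambda>s. (X s, s)) has_derivative (\<lambda>h. (h *\<^sub>R X', h))) (at t within I)"
    using has_derivative_Pair[OF assms(2)[unfolded has_vector_derivative_def] has_derivative_ident] .
  have 2: "(F has_derivative ?D) (at (X t, t) within (\<lambda>s. (X s, s)) ` I)"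
    by (rule has_derivative_subset[OF iffD1[OF frechet_derivative_works assms(1)]]) auto
  have "linear ?D"
    using assms frechet_derivative_works has_derivative_linear by blast
  then have "?D (h *\<^sub>R X', h) = h *\<^sub>R ?D (X', 1)" for h
    using linear_scale[of ?D h "(X', 1)"] by simp
  then have "(\<lambda>h. ?D (h *\<^sub>R X', h)) = (\<lambda>h. h *\<^sub>R ?D (X', 1))"
    by (rule ext)
  then show ?thesis
    using diff_chain_within[OF 1 2] unfolding has_vector_derivative_def o_def by simp
qed

lemma frechet_derivative_Pair_split:
  fixes F :: "(real^'n) \<times> real \<Rightarrow> 'b::real_normed_vector"
  assumes "F differentiable at z within S"
  shows "frechet_derivative F (at z within S) (v, h)
       = frechet_derivative F (at z within S) (v, 0) + h *\<^sub>R frechet_derivative F (at z within S) (0, 1)"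
proof -
  have lin: "linear (frechet_derivative F (at z within S))"
    using assms frechet_derivative_works has_derivative_linear by blast
  have "(v, h) = (v, 0) + h *\<^sub>R (0, 1)"
    by simp
  then show ?thesis
    using linear_add[OF lin, of "(v, 0)" "h *\<^sub>R (0, 1)"] linear_scale[OF lin, of h "(0, 1)"] by simp
qed

section \<open>Gaussian phase factors\<close>

definition quad_phase :: "real^'n^'n \<Rightarrow> real^'n \<Rightarrow> real^'n \<Rightarrow> real^'n \<Rightarrow> real" where
  "quad_phase R q0 p0 y = (y - q0) \<bullet> (R *v (y - q0)) + p0 \<bullet> (y - q0)"

definition quad_phase_grad :: "real^'n^'n \<Rightarrow> real^'n \<Rightarrow> real^'n \<Rightarrow> real^'n \<Rightarrow> real^'n" where
  "quad_phase_grad R q0 p0 y = 2 *\<^sub>R (R *v (y - q0)) + p0"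

definition phase_factor ::
  "complex \<Rightarrow> real^'n^'n \<Rightarrow> real^'n \<Rightarrow> real^'n \<Rightarrow> complex \<Rightarrow> real^'n \<Rightarrow> complex" where
  "phase_factor k R q0 p0 \<gamma> y = exp (k * (of_real (quad_phase R q0 p0 y) + \<gamma>))"

lemma has_derivative_quad_phase:
  "(quad_phase R q0 p0 has_derivative
     (\<lambda>v. v \<bullet> (R *v (y - q0)) + (y - q0) \<bullet> (R *v v) + p0 \<bullet> v)) (at y)"
  unfolding quad_phase_def
  by (auto intro!: derivative_eq_intros has_derivative_matrix_vector_mult simp: algebra_simps)

lemma inner_transpose_matrix_vector: "x \<bullet> (transpose (R::real^'n^'m) *v y) = (R *v x) \<bullet> y"
  by (metis dot_lmul_matrix inner_commute transpose_matrix_vector)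

lemma inner_symmetric_matrix_vector:
  "transpose R = R \<Longrightarrow> x \<bullet> ((R::real^'n^'n) *v y) = (R *v x) \<bullet> y"
  using inner_transpose_matrix_vector[of x R y] by simp

lemma pdx_quad_phase:
  assumes "transpose R = R"
  shows "pdx a (quad_phase R q0 p0) y = quad_phase_grad R q0 p0 y $ a"
  using pdx_eq[OF has_derivative_quad_phase[of R q0 p0 y], of a]
    inner_symmetric_matrix_vector[OF assms, of "y - q0" "axis a 1"]
  by (simp add: quad_phase_grad_def inner_axis inner_axis')

lemma has_derivative_exp_comp:
  fixes f :: "real^'n \<Rightarrow> complex"
  assumes "(f has_derivative f') (at y)"
  shows "((\<lambda>y. exp (f y)) has_derivative (\<lambda>v. exp (f y) * f' v)) (at y)"
proof -
  have "(exp has_derivative (\<lambda>h. exp (f y) * h)) (at (f y))"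
    using DERIV_exp[of "f y"] unfolding has_field_derivative_def by simp
  from diff_chain_at[OF assms this] show ?thesis
    by (simp add: o_def)
qed

lemma has_vector_derivative_exp_comp:
  fixes f :: "real \<Rightarrow> complex"
  assumes "(f has_vector_derivative f') (at t within S)"
  shows "((\<lambda>s. exp (f s)) has_vector_derivative (exp (f t) * f')) (at t within S)"
proof -
  have "(exp has_derivative (\<lambda>h. exp (f t) * h)) (at (f t))"
    using DERIV_exp[of "f t"] unfolding has_field_derivative_def by simp
  from diff_chain_within[OF assms[unfolded has_vector_derivative_def] has_derivative_at_withinI[OF this]]
  show ?thesis
    unfolding has_vector_derivative_def o_def by (simp add: algebra_simps scaleR_conv_of_real)
qed

lemma has_derivative_phase_factor:
  "(phase_factor k R q0 p0 \<gamma> has_derivative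
     (\<lambda>v. phase_factor k R q0 p0 \<gamma> y
            * (k * of_real (v \<bullet> (R *v (y - q0)) + (y - q0) \<bullet> (R *v v) + p0 \<bullet> v)))) (at y)"
proof -
  have "((\<lambda>y. k * (of_real (quad_phase R q0 p0 y) + \<gamma>)) has_derivative
     (\<lambda>v. k * (of_real (v \<bullet> (R *v (y - q0)) + (y - q0) \<bullet> (R *v v) + p0 \<bullet> v) + 0))) (at y)"
    by (intro has_derivative_mult_right has_derivative_add has_derivative_of_real
        has_derivative_quad_phase has_derivative_const)
  from has_derivative_exp_comp[OF this] show ?thesis
    unfolding phase_factor_def by simp
qed

lemma differentiable_phase_factor: "phase_factor k R q0 p0 \<gamma> differentiable at y"
  using has_derivative_phase_factor differentiable_def by blast

lemma pdx_phase_factor: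
  assumes "transpose R = R"
  shows "pdx a (phase_factor k R q0 p0 \<gamma>) y
       = k * of_real (quad_phase_grad R q0 p0 y $ a) * phase_factor k R q0 p0 \<gamma> y"
proof -
  have "pdx a (phase_factor k R q0 p0 \<gamma>) y
      = phase_factor k R q0 p0 \<gamma> y * (k * of_real (pdx a (quad_phase R q0 p0) y))"
    using pdx_eq[OF has_derivative_phase_factor] pdx_eq[OF has_derivative_quad_phase] by metis
  then show ?thesis
    using pdx_quad_phase[OF assms] by simp
qed

lemma has_derivative_quad_phase_grad_nth:
  "((\<lambda>y. complex_of_real (quad_phase_grad R q0 p0 y $ a)) has_derivative
     (\<lambda>v. of_real (2 * (R *v v) $ a))) (at y)"
  unfolding quad_phase_grad_def
  by (auto intro!: derivative_eq_intros has_derivative_matrix_vector_mult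
      bounded_linear.has_derivative[OF bounded_linear_vec_nth])

lemma pdx_mult_phase_factor:
  assumes "transpose R = R" "P differentiable at y"
  shows "pdx a (\<lambda>y. P y * phase_factor k R q0 p0 \<gamma> y) y
       = (pdx a P y + k * of_real (quad_phase_grad R q0 p0 y $ a) * P y) * phase_factor k R q0 p0 \<gamma> y"
  using pdx_mult[OF assms(2) differentiable_phase_factor, of a] pdx_phase_factor[OF assms(1), of a k q0 p0 \<gamma> y]
  by (simp add: algebra_simps)

lemma differentiable_pdx_mult_phase_factor:
  assumes "transpose R = R" "\<And>y. P differentiable at y" "pdx a P differentiable at y"
  shows "pdx a (\<lambda>y. P y * phase_factor k R q0 p0 \<gamma> y) differentiable at y"
proof -
  have "pdx a (\<lambda>y. P y * phase_factor k R q0 p0 \<gamma> y)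
      = (\<lambda>y. (pdx a P y + k * of_real (quad_phase_grad R q0 p0 y $ a) * P y) * phase_factor k R q0 p0 \<gamma> y)"
    using pdx_mult_phase_factor[OF assms(1,2)] by blast
  moreover have "(\<lambda>y. complex_of_real (quad_phase_grad R q0 p0 y $ a)) differentiable at y"
    using has_derivative_quad_phase_grad_nth differentiable_def by blast
  ultimately show ?thesis
    using assms(2,3) by (simp add: differentiable_phase_factor)
qed

lemma pdx_pdx_mult_phase_factor:
  fixes P :: "real^'n \<Rightarrow> complex" and q0 p0 :: "real^'n" and k \<gamma> :: complex
  assumes symR: "transpose R = R" and dP: "\<And>y. P differentiable at y"
    and dP2: "pdx a P differentiable at y"
  defines "r \<equiv> quad_phase_grad R q0 p0 y $ a" and "E \<equiv> phase_factor k R q0 p0 \<gamma> y"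
  shows "pdx a (pdx a (\<lambda>y. P y * phase_factor k R q0 p0 \<gamma> y)) y
       = (pdx a (pdx a P) y + k * of_real (2 * R $ a $ a) * P y + k * of_real r * pdx a P y) * E
         + (pdx a P y + k * of_real r * P y) * (k * of_real r * E)"
proof -
  let ?r = "\<lambda>y. complex_of_real (quad_phase_grad R q0 p0 y $ a)"
  have dr: "?r differentiable at y"
    using has_derivative_quad_phase_grad_nth differentiable_def by blast
  have pdx_r: "pdx a ?r y = of_real (2 * R $ a $ a)"
    using pdx_eq[OF has_derivative_quad_phase_grad_nth] by (simp add: matrix_vector_mult_axis_nth)
  have dkr: "(\<lambda>y. k * ?r y) differentiable at y"
    using dr by simp
  have dkrP: "(\<lambda>y. k * ?r y * P y) differentiable at y"
    using dkr dP by simp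
  have pdx_krP: "pdx a (\<lambda>y. k * ?r y * P y) y = k * of_real (2 * R $ a $ a) * P y + k * ?r y * pdx a P y"
    using pdx_mult[OF dkr dP, of a] pdx_mult[OF differentiable_const dr, of a k]
    by (simp add: pdx_const pdx_r)
  have "pdx a (\<lambda>y. P y * phase_factor k R q0 p0 \<gamma> y)
      = (\<lambda>y. (pdx a P y + k * ?r y * P y) * phase_factor k R q0 p0 \<gamma> y)"
    using pdx_mult_phase_factor[OF symR dP] by blast
  then have "pdx a (pdx a (\<lambda>y. P y * phase_factor k R q0 p0 \<gamma> y)) y
      = pdx a (\<lambda>y. (pdx a P y + k * ?r y * P y) * phase_factor k R q0 p0 \<gamma> y) y"
    by simp
  also have "\<dots> = pdx a (\<lambda>y. pdx a P y + k * ?r y * P y) y * E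
      + (pdx a P y + k * ?r y * P y) * pdx a (phase_factor k R q0 p0 \<gamma>) y"
    unfolding E_def by (rule pdx_mult[OF differentiable_add[OF dP2 dkrP] differentiable_phase_factor])
  also have "\<dots> = (pdx a (pdx a P) y + k * of_real (2 * R $ a $ a) * P y + k * of_real r * pdx a P y) * E
         + (pdx a P y + k * of_real r * P y) * (k * of_real r * E)"
    unfolding pdx_add[OF dP2 dkrP] pdx_krP pdx_phase_factor[OF symR] r_def E_def
    by (simp add: algebra_simps)
  finally show ?thesis .
qed

section \<open>Matrix inverses along a curve\<close>

lemma matrix_inv_inverse:
  assumes "invertible (A::real^'n^'n)"
  shows "A ** matrix_inv A = mat 1 \<and> matrix_inv A ** A = mat 1"
  using assms unfolding invertible_def matrix_inv_def by (rule someI_ex)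

lemma matrix_inv_right: "invertible (A::real^'n^'n) \<Longrightarrow> A ** matrix_inv A = mat 1"
  using matrix_inv_inverse by blast

lemma matrix_inv_left: "invertible (A::real^'n^'n) \<Longrightarrow> matrix_inv A ** A = mat 1"
  using matrix_inv_inverse by blast

lemma matrix_inv_transpose:
  assumes "invertible (A::real^'n^'n)"
  shows "matrix_inv (transpose A) = transpose (matrix_inv A)"
proof -
  have "transpose (matrix_inv A) = transpose (matrix_inv A) ** (transpose A ** matrix_inv (transpose A))"
    using matrix_inv_right[OF transpose_invertible[OF assms]] by simp
  also have "\<dots> = transpose (A ** matrix_inv A) ** matrix_inv (transpose A)"
    by (simp add: matrix_mul_assoc matrix_transpose_mul)
  finally show ?thesis
    by (simp add: matrix_inv_right[OF assms])
qed

lemma differentiable_prod_fun: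
  fixes f :: "'i \<Rightarrow> 'a::real_normed_vector \<Rightarrow> real"
  assumes "finite I" "\<And>i. i \<in> I \<Longrightarrow> f i differentiable (at x within S)"
  shows "(\<lambda>x. \<Prod>i\<in>I. f i x) differentiable (at x within S)"
  using assms by (induction I rule: finite_induct) (simp_all add: differentiable_mult)

lemma differentiable_det:
  fixes F :: "real \<Rightarrow> real^'n^'n"
  assumes "\<And>i j. (\<lambda>s. F s $ i $ j) differentiable (at t within S)"
  shows "(\<lambda>s. det (F s)) differentiable (at t within S)"
  unfolding det_def
  by (intro differentiable_sum[OF finite_permutations[OF finite_class.finite_UNIV]] ballI
      differentiable_mult[OF differentiable_const differentiable_prod_fun[OF finite_class.finite_UNIV assms]])

lemma differentiable_matrix_entry:
  fixes F :: "real \<Rightarrow> real^'n^'m"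
  assumes "F differentiable (at t within S)"
  shows "(\<lambda>s. F s $ i $ j) differentiable (at t within S)"
proof -
  have "bounded_linear (\<lambda>M::real^'n^'m. M $ i $ j)"
    using bounded_linear_compose[OF bounded_linear_vec_nth bounded_linear_vec_nth] .
  from bounded_linear.has_derivative[OF this] show ?thesis
    using assms unfolding differentiable_def by blast
qed

lemma differentiable_vec_componentwise:
  fixes f :: "real \<Rightarrow> real^'n"
  assumes "\<And>k. (\<lambda>s. f s $ k) differentiable (at t within S)"
  shows "f differentiable (at t within S)"
proof -
  have "f s = (\<Sum>k\<in>UNIV. f s $ k *\<^sub>R axis k 1)" for s
    using basis_expansion[of "f s"] by (simp add: scalar_mult_eq_scaleR)
  then have expansion: "f = (\<lambda>s. \<Sum>k\<in>UNIV. f s $ k *\<^sub>R axis k 1)"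
    by (rule ext)
  show ?thesis
    by (subst expansion) (intro differentiable_sum[OF finite_class.finite_UNIV] ballI
        differentiable_scaleR assms differentiable_const)
qed

text \<open>By Cramer's rule the solution of \<^term>\<open>B s *v X = b\<close> is a quotient of determinants,
  hence differentiable wherever \<^term>\<open>B\<close> is.\<close>

lemma differentiable_matrix_inv_apply:
  fixes B :: "real \<Rightarrow> real^'n^'n"
  assumes "B differentiable (at t within S)" "\<forall>s\<in>S. invertible (B s)" "t \<in> S"
  shows "(\<lambda>s. matrix_inv (B s) *v b) differentiable (at t within S)"
proof -
  have det_nz: "det (B s) \<noteq> 0" if "s \<in> S" for s
    using assms(2) that invertible_det_nz by blast
  define g where "g s = (\<chi> k. det (\<chi> i j. if j = k then b $ i else B s $ i $ j) / det (B s))" for s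
  have g_eq: "matrix_inv (B s) *v b = g s" if "s \<in> S" for s
  proof -
    have "B s *v (matrix_inv (B s) *v b) = b"
      using matrix_inv_right[OF assms(2)[rule_format, OF that]] by (simp add: matrix_vector_mul_assoc)
    then show ?thesis
      using cramer[OF det_nz[OF that]] unfolding g_def by blast
  qed
  have "(\<lambda>s. det (\<chi> i j. if j = k then b $ i else B s $ i $ j)) differentiable (at t within S)" for k
  proof (rule differentiable_det)
    show "(\<lambda>s. (\<chi> i j. if j = k then b $ i else B s $ i $ j) $ i $ j) differentiable (at t within S)"
      for i j
      by (cases "j = k") (auto intro: differentiable_matrix_entry[OF assms(1)])
  qed
  moreover have "(\<lambda>s. det (B s)) differentiable (at t within S)"
    by (rule differentiable_det) (auto intro: differentiable_matrix_entry[OF assms(1)])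
  ultimately have "g differentiable (at t within S)"
    unfolding g_def using det_nz[OF assms(3)]
    by (intro differentiable_vec_componentwise) (simp add: differentiable_divide)
  then obtain g' where "(g has_derivative g') (at t within S)"
    unfolding differentiable_def by blast
  then have "((\<lambda>s. matrix_inv (B s) *v b) has_derivative g') (at t within S)"
    by (rule has_derivative_transform_within[where d=1]) (use assms(3) g_eq in auto)
  then show ?thesis
    unfolding differentiable_def by blast
qed

lemma has_vector_derivative_matrix_inv_apply:
  fixes B :: "real \<Rightarrow> real^'n^'n"
  assumes ab: "a < t0" and t: "t \<in> {a..t0}" and dB: "(B has_vector_derivative B') (at t within {a..t0})"
    and inv: "\<forall>s\<in>{a..t0}. invertible (B s)"
  shows "((\<lambda>s. matrix_inv (B s) *v b) has_vector_derivative
           - (matrix_inv (B t) *v (B' *v (matrix_inv (B t) *v b)))) (at t within {a..t0})"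
proof -
  let ?X = "\<lambda>s. matrix_inv (B s) *v b"
  define X' where "X' = vector_derivative ?X (at t within {a..t0})"
  have "?X differentiable (at t within {a..t0})"
    using dB inv t by (intro differentiable_matrix_inv_apply)
      (auto simp: differentiable_def has_vector_derivative_def)
  then have dX: "(?X has_vector_derivative X') (at t within {a..t0})"
    unfolding X'_def using vector_derivative_works by blast
  have "((\<lambda>s. B s *v ?X s) has_vector_derivative (B t *v X' + B' *v ?X t)) (at t within {a..t0})"
    using has_vector_derivative_matrix_vector_mult[OF dB dX] .
  moreover have "((\<lambda>s. B s *v ?X s) has_vector_derivative 0) (at t within {a..t0})"
  proof (rule has_vector_derivative_transform_within[OF has_vector_derivative_const[of b] zero_less_one t])
    fix s assume "s \<in> {a..t0}"
    then show "b = B s *v ?X s"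
      using matrix_inv_right[OF inv[rule_format]] by (simp add: matrix_vector_mul_assoc)
  qed
  ultimately have "B t *v X' + B' *v ?X t = 0"
    using vector_derivative_unique_within_closed_interval[OF ab, of t] t by (simp add: cbox_interval)
  then have "B t *v X' = - (B' *v ?X t)"
    by (simp add: eq_neg_iff_add_eq_0)
  then have "matrix_inv (B t) *v (B t *v X') = - (matrix_inv (B t) *v (B' *v ?X t))"
    by (simp add: linear_neg[OF matrix_vector_mul_linear])
  then have "X' = - (matrix_inv (B t) *v (B' *v ?X t))"
    using matrix_inv_left[OF inv[rule_format, OF t]] by (simp add: matrix_vector_mul_assoc)
  then show ?thesis
    using dX by simp
qed

section \<open>The real part of the Riccati equation\<close>

lemma has_vector_derivative_cplx_mat:
  fixes aR aI :: "real \<Rightarrow> real^'n^'n"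
  assumes "(aR has_vector_derivative R') (at t within S)" "(aI has_vector_derivative I') (at t within S)"
  shows "((\<lambda>s. cplx_mat (aR s) (aI s)) has_vector_derivative cplx_mat R' I') (at t within S)"
proof -
  have lin: "bounded_linear (\<lambda>z::(real^'n^'n) \<times> (real^'n^'n). cplx_mat (fst z) (snd z))"
    by (intro linear_conv_bounded_linear[THEN iffD1] linearI)
      (auto simp: cplx_mat_def vec_eq_iff complex_eq_iff)
  have scale: "cplx_mat (h *\<^sub>R R') (h *\<^sub>R I') = h *\<^sub>R cplx_mat R' I'" for h
    by (auto simp: cplx_mat_def vec_eq_iff complex_eq_iff)
  have "((\<lambda>s. (aR s, aI s)) has_derivative (\<lambda>h. (h *\<^sub>R R', h *\<^sub>R I'))) (at t within S)"
    using has_derivative_Pair[OF assms[unfolded has_vector_derivative_def]] .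
  from bounded_linear.has_derivative[OF lin this] show ?thesis
    unfolding has_vector_derivative_def by (simp add: scale)
qed

lemma Re_cplx_mat_mult: "(\<chi> i j. Re ((cplx_mat R I ** cplx_mat R2 I2) $ i $ j)) = R ** R2 - I ** I2"
  by (simp add: vec_eq_iff cplx_mat_def matrix_matrix_mult_def Re_sum sum_subtractf)

lemma Re_cmat_cplx_mat_mult: "(\<chi> i j. Re ((cmat M ** cplx_mat R I) $ i $ j)) = M ** R"
  by (simp add: vec_eq_iff cplx_mat_def cmat_def matrix_matrix_mult_def Re_sum)

lemma Re_cplx_mat_cmat_mult: "(\<chi> i j. Re ((cplx_mat R I ** cmat M) $ i $ j)) = R ** M"
  by (simp add: vec_eq_iff cplx_mat_def cmat_def matrix_matrix_mult_def Re_sum)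

lemma Re_riccati:
  fixes aR aI :: "real \<Rightarrow> real^'n^'n"
  assumes ab: "a < b" and t: "t \<in> {a..b}"
    and dR: "(aR has_vector_derivative R') (at t within {a..b})"
    and dI: "(aI has_vector_derivative I') (at t within {a..b})"
    and riccati: "vector_derivative (\<lambda>s. cplx_mat (aR s) (aI s)) (at t within {a..b})
        = (let \<alpha> = cplx_mat (aR t) (aI t) in
             (-2) *\<^sub>R (\<alpha> ** \<alpha>) - (1/2) *\<^sub>R cmat HU + cmat (transpose J) ** \<alpha> + \<alpha> ** cmat J
             + (1/2) *\<^sub>R cmat HAp)"
  shows "R' = (-2) *\<^sub>R (aR t ** aR t - aI t ** aI t) - (1/2) *\<^sub>R HU
              + transpose J ** aR t + aR t ** J + (1/2) *\<^sub>R HAp"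
proof -
  let ?\<alpha> = "cplx_mat (aR t) (aI t)"
  have "cplx_mat R' I' = (-2) *\<^sub>R (?\<alpha> ** ?\<alpha>) - (1/2) *\<^sub>R cmat HU
      + cmat (transpose J) ** ?\<alpha> + ?\<alpha> ** cmat J + (1/2) *\<^sub>R cmat HAp"
    using vector_derivative_within_closed_interval[OF ab t has_vector_derivative_cplx_mat[OF dR dI]]
      riccati by (simp add: Let_def)
  then have "(\<chi> i j. Re (cplx_mat R' I' $ i $ j)) = (-2) *\<^sub>R (\<chi> i j. Re ((?\<alpha> ** ?\<alpha>) $ i $ j))
      - (1/2) *\<^sub>R HU + (\<chi> i j. Re ((cmat (transpose J) ** ?\<alpha>) $ i $ j))
      + (\<chi> i j. Re ((?\<alpha> ** cmat J) $ i $ j)) + (1/2) *\<^sub>R HAp"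
    by (simp add: vec_eq_iff cmat_def)
  moreover have "(\<chi> i j. Re (cplx_mat R' I' $ i $ j)) = R'"
    by (simp add: vec_eq_iff cplx_mat_def)
  ultimately show ?thesis
    unfolding Re_cplx_mat_mult Re_cmat_cplx_mat_mult Re_cplx_mat_cmat_mult by simp
qed

lemma inner_Aq: "p \<bullet> Aq A q \<xi> = (1/2) * (\<xi> \<bullet> (hessA_dot A q p *v \<xi>))"
proof -
  let ?H = "\<lambda>j l l'. hess (\<lambda>y. A y $ j) q $ l $ l'"
  have "p \<bullet> Aq A q \<xi> = (\<Sum>j\<in>UNIV. \<Sum>l\<in>UNIV. \<Sum>l'\<in>UNIV. (1/2) * (p$j * ?H j l l' * \<xi>$l * \<xi>$l'))"
    unfolding Aq_def inner_vec_def by (simp add: sum_distrib_left mult_ac)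
  also have "\<dots> = (\<Sum>l\<in>UNIV. \<Sum>j\<in>UNIV. \<Sum>l'\<in>UNIV. (1/2) * (p$j * ?H j l l' * \<xi>$l * \<xi>$l'))"
    by (rule sum.swap)
  also have "\<dots> = (\<Sum>l\<in>UNIV. \<Sum>l'\<in>UNIV. \<Sum>j\<in>UNIV. (1/2) * (p$j * ?H j l l' * \<xi>$l * \<xi>$l'))"
    by (rule sum.cong[OF refl], rule sum.swap)
  also have "\<dots> = (1/2) * (\<xi> \<bullet> (hessA_dot A q p *v \<xi>))"
    unfolding hessA_dot_def inner_vec_def matrix_vector_mult_def
    by (simp add: sum_distrib_left sum_distrib_right mult_ac)
  finally show ?thesis .
qed

text \<open>The phase balance: the rate of change of the phase along the moving point plus the
  potential splits into the kinetic term of the local momentum \<^term>\<open>r\<close>, the term coming from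
  the imaginary part of \<open>\<alpha>\<close>, and the Taylor remainders.\<close>

lemma real_phase_balance:
  fixes R I J HU HAp :: "real^'n^'n" and \<xi> p q gU :: "real^'n"
    and A :: "real^'n \<Rightarrow> real^'n" and U :: "real^'n \<Rightarrow> real"
  assumes symR: "transpose R = R"
    and xd: "xd = 2 *\<^sub>R (R *v \<xi>) - J *v \<xi>"
    and Rd: "Rd = (-2) *\<^sub>R (R ** R - I ** I) - (1/2) *\<^sub>R HU + transpose J ** R + R ** J + (1/2) *\<^sub>R HAp"
    and pd: "pd = transpose J *v p - gU"
    and a1: "a1 = A (\<xi> + q) - A q - J *v \<xi>"
    and Aqp: "p \<bullet> aq = (1/2) * (\<xi> \<bullet> (HAp *v \<xi>))"
    and ur: "ur = U (\<xi> + q) - U q - \<xi> \<bullet> gU - (1/2) * (\<xi> \<bullet> (HU *v \<xi>))"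
    and r: "r = 2 *\<^sub>R (R *v \<xi>) + p"
  shows "xd \<bullet> (R *v \<xi>) + \<xi> \<bullet> (Rd *v \<xi> + R *v xd) + pd \<bullet> \<xi> + p \<bullet> xd
           + ((1/2) * (norm p)\<^sup>2 - U q) + U (\<xi> + q)
       = (1/2) * (r \<bullet> r) + 2 * (\<xi> \<bullet> ((I ** I) *v \<xi>)) + r \<bullet> a1
           + (ur - 2 * (a1 \<bullet> (R *v \<xi>)) - (a1 - aq) \<bullet> p)"
proof -
  define u where "u = R *v \<xi>"
  define j where "j = J *v \<xi>"
  have s1: "\<xi> \<bullet> (R *v y) = u \<bullet> y" for y
    unfolding u_def using inner_symmetric_matrix_vector[OF symR] .
  have s2: "\<xi> \<bullet> ((R ** J) *v \<xi>) = u \<bullet> j"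
    unfolding matrix_vector_mul_assoc[symmetric] j_def by (rule s1)
  have s3: "\<xi> \<bullet> ((transpose J ** R) *v \<xi>) = u \<bullet> j"
    unfolding matrix_vector_mul_assoc[symmetric] inner_transpose_matrix_vector u_def j_def
    by (rule inner_commute)
  have s4: "\<xi> \<bullet> ((R ** R) *v \<xi>) = u \<bullet> u"
    unfolding matrix_vector_mul_assoc[symmetric] using s1 u_def by simp
  have s5: "(transpose J *v p) \<bullet> \<xi> = p \<bullet> j"
    unfolding j_def by (metis inner_commute inner_transpose_matrix_vector)
  have Rd': "\<xi> \<bullet> (Rd *v \<xi>) = -2 * (u \<bullet> u) + 2 * (\<xi> \<bullet> ((I ** I) *v \<xi>))
      - (1/2) * (\<xi> \<bullet> (HU *v \<xi>)) + 2 * (u \<bullet> j) + (1/2) * (\<xi> \<bullet> (HAp *v \<xi>))"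
    unfolding Rd using s2 s3 s4
    by (simp add: matrix_vector_mult_add_rdistrib matrix_vector_mult_diff_rdistrib
        scaleR_matrix_vector_assoc[symmetric] inner_add_right inner_diff_right algebra_simps)
  have "xd \<bullet> u = 2 * (u \<bullet> u) - u \<bullet> j" "\<xi> \<bullet> (R *v xd) = 2 * (u \<bullet> u) - u \<bullet> j"
    "pd \<bullet> \<xi> = p \<bullet> j - \<xi> \<bullet> gU" "p \<bullet> xd = 2 * (u \<bullet> p) - p \<bullet> j"
    "r \<bullet> r = 4 * (u \<bullet> u) + 4 * (u \<bullet> p) + p \<bullet> p" "r \<bullet> a1 = 2 * (a1 \<bullet> u) + a1 \<bullet> p"
    unfolding xd pd r s1 u_def[symmetric] j_def[symmetric] inner_diff_left s5
    by (simp_all add: inner_add_left inner_add_right inner_diff_right inner_commute)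
  moreover have "(a1 - aq) \<bullet> p = a1 \<bullet> p - (1/2) * (\<xi> \<bullet> (HAp *v \<xi>))"
    unfolding inner_diff_left inner_commute[of aq p] Aqp by simp
  ultimately show ?thesis
    unfolding inner_add_right Rd' ur u_def[symmetric] power2_norm_eq_inner
    by (simp add: algebra_simps)
qed

text \<open>After substituting the Schroedinger equation for \<^term>\<open>\<psi>t\<close> the second derivatives
  and the \<^term>\<open>Ax\<close>-part of the first derivatives cancel, and the remaining coefficients of
  \<^term>\<open>\<psi>0 * E\<close> agree by the phase balance.\<close>

lemma modulated_equation_algebra:
  fixes \<epsilon> :: real and g Hd :: "'n::finite \<Rightarrow> complex" and Rdiag :: "'n \<Rightarrow> real"
    and Xd r a1 Ax :: "real^'n"
  assumes eps: "\<epsilon> > 0"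
    and k: "k = - (\<i> / of_real \<epsilon>)"
    and schr: "\<i> * of_real \<epsilon> * \<psi>t = - of_real (\<epsilon>\<^sup>2 / 2) * (\<Sum>a\<in>UNIV. Hd a)
          + \<i> * of_real \<epsilon> * (\<Sum>j\<in>UNIV. of_real (Ax $ j) * g j) + of_real Ux * \<psi>0"
    and vec: "Xd + Ax = r + a1"
    and real: "\<Phi>d + ReG + Ux = (1/2) * (r \<bullet> r) + 2 * (\<epsilon> * Q) + r \<bullet> a1 + Z"
    and gd: "\<gamma>d = of_real ReG + \<i> * of_real \<epsilon> * of_real (\<Sum>a\<in>UNIV. Rdiag a)"
  shows "((\<Sum>a\<in>UNIV. Xd $ a *\<^sub>R g a) + \<psi>t) * E + \<psi>0 * (E * (k * (of_real \<Phi>d + \<gamma>d)))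
    = \<i> / 2 * (of_real \<epsilon> * (\<Sum>a\<in>UNIV. (Hd a + k * of_real (2 * Rdiag a) * \<psi>0 + k * of_real (r $ a) * g a) * E
                 + (g a + k * of_real (r $ a) * \<psi>0) * (k * of_real (r $ a) * E)))
      - 2 * \<i> * of_real Q * (\<psi>0 * E)
      + (\<Sum>a\<in>UNIV. (g a + k * of_real (r $ a) * \<psi>0) * E * of_real (a1 $ a))
      + 1 / (\<i> * of_real \<epsilon>) * of_real Z * (\<psi>0 * E)"
proof -
  define S where "S v = (\<Sum>a\<in>UNIV. g a * of_real (v $ a))" for v :: "real^'n"
  let ?Lap = "\<Sum>a\<in>UNIV. Hd a"
  let ?tr = "\<Sum>a\<in>UNIV. Rdiag a"
  have ke: "k * (\<i> * of_real \<epsilon>) = 1" and ki: "1 / (\<i> * of_real \<epsilon>) = k"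
    using eps k by (simp_all add: field_simps)
  have psit: "\<psi>t = k * (- of_real (\<epsilon>\<^sup>2 / 2) * ?Lap) + S Ax + k * (of_real Ux * \<psi>0)"
  proof -
    have "(\<Sum>j\<in>UNIV. of_real (Ax $ j) * g j) = S Ax"
      unfolding S_def by (simp add: mult.commute)
    then have "k * (\<i> * of_real \<epsilon> * \<psi>t)
        = k * (- of_real (\<epsilon>\<^sup>2 / 2) * ?Lap + \<i> * of_real \<epsilon> * S Ax + of_real Ux * \<psi>0)"
      using schr by simp
    then have "k * (\<i> * of_real \<epsilon> * \<psi>t) = k * (- of_real (\<epsilon>\<^sup>2 / 2) * ?Lap)
        + k * (\<i> * of_real \<epsilon>) * S Ax + k * (of_real Ux * \<psi>0)"
      by (simp only: distrib_left mult.assoc)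
    then show ?thesis
      using ke by (simp add: mult.assoc[symmetric])
  qed
  have rr: "(\<Sum>a\<in>UNIV. of_real (r $ a) * of_real (v $ a)) = (of_real (r \<bullet> v) :: complex)" for v
    by (simp add: inner_vec_def)
  have hess_sum: "(\<Sum>a\<in>UNIV. (Hd a + k * of_real (2 * Rdiag a) * \<psi>0 + k * of_real (r $ a) * g a) * E
                 + (g a + k * of_real (r $ a) * \<psi>0) * (k * of_real (r $ a) * E))
      = ?Lap * E + (2 * k * \<psi>0 * E) * of_real ?tr + (2 * k * E) * S r
      + (k * k * \<psi>0 * E) * of_real (r \<bullet> r)"
    unfolding S_def rr[symmetric] of_real_sum sum_distrib_left sum_distrib_right sum.distrib[symmetric]
    by (rule sum.cong) (simp_all add: algebra_simps)
  have grad_sum: "(\<Sum>a\<in>UNIV. (g a + k * of_real (r $ a) * \<psi>0) * E * of_real (a1 $ a))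
      = E * S a1 + (k * \<psi>0 * E) * of_real (r \<bullet> a1)"
    unfolding S_def rr[symmetric] sum_distrib_left sum.distrib[symmetric]
    by (rule sum.cong) (simp_all add: algebra_simps)
  have "S (u + v) = S u + S v" for u v
    unfolding S_def by (simp add: distrib_left sum.distrib)
  then have "S Xd + S Ax = S r + S a1"
    by (metis vec)
  moreover have "(\<Sum>a\<in>UNIV. Xd $ a *\<^sub>R g a) = S Xd"
    unfolding S_def by (simp add: scaleR_conv_of_real mult.commute)
  ultimately have S_Xd: "(\<Sum>a\<in>UNIV. Xd $ a *\<^sub>R g a) = S r + S a1 - S Ax"
    by (simp add: algebra_simps)
  have phi: "(of_real \<Phi>d :: complex)
      = of_real ((1/2) * (r \<bullet> r) + 2 * (\<epsilon> * Q) + r \<bullet> a1 + Z) - of_real ReG - of_real Ux"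
    using real by (simp add: algebra_simps flip: of_real_add of_real_diff)
  show ?thesis
    unfolding S_Xd hess_sum grad_sum psit ki phi gd
    using eps by (simp add: k field_simps power2_eq_square)
qed

section \<open>The moving Gaussian frame\<close>

locale gaussian_frame =
  fixes \<epsilon> T :: real
    and A :: "real^'n \<Rightarrow> real^'n" and U :: "real^'n \<Rightarrow> real"
    and \<psi> :: "real^'n \<Rightarrow> real \<Rightarrow> complex"
    and q p :: "real \<Rightarrow> real^'n"
    and \<alpha>R \<alpha>I B :: "real \<Rightarrow> real^'n^'n"
    and \<gamma>2 :: "real \<Rightarrow> complex"
    and w :: "real^'n \<Rightarrow> real \<Rightarrow> complex"
  assumes eps: "\<epsilon> > 0" and Tpos: "T > 0"
    and psi_smooth: "C_inf_on (UNIV \<times> {0..T}) (\<lambda>(x, t). \<psi> x t)"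
    and schroedinger: "\<forall>x. \<forall>t\<in>{0..T}.
        \<i> * of_real \<epsilon> * vector_derivative (\<lambda>s. \<psi> x s) (at t within {0..T})
        = - of_real (\<epsilon>\<^sup>2 / 2) * laplacian (\<lambda>y. \<psi> y t) x
          + \<i> * of_real \<epsilon> * (\<Sum>j\<in>UNIV. of_real (A x $ j) * pdx j (\<lambda>y. \<psi> y t) x)
          + of_real (U x) * \<psi> x t"
    and q_smooth: "C_inf_on {0..T} q" and p_smooth: "C_inf_on {0..T} p"
    and aR_smooth: "C_inf_on {0..T} \<alpha>R" and aI_smooth: "C_inf_on {0..T} \<alpha>I"
    and g_smooth: "C_inf_on {0..T} \<gamma>2" and B_smooth: "C_inf_on {0..T} B"
    and aR_sym: "\<forall>t\<in>{0..T}. symmetric_mat (\<alpha>R t)"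
    and q_ode: "\<forall>t\<in>{0..T}. vector_derivative q (at t within {0..T}) = p t - A (q t)"
    and p_ode: "\<forall>t\<in>{0..T}. vector_derivative p (at t within {0..T})
        = transpose (jac A (q t)) *v p t - grad U (q t)"
    and alpha_ode: "\<forall>t\<in>{0..T}.
        vector_derivative (\<lambda>s. cplx_mat (\<alpha>R s) (\<alpha>I s)) (at t within {0..T})
        = (let \<alpha> = cplx_mat (\<alpha>R t) (\<alpha>I t) in
             (-2) *\<^sub>R (\<alpha> ** \<alpha>) - (1/2) *\<^sub>R cmat (hess U (q t))
             + cmat (transpose (jac A (q t))) ** \<alpha> + \<alpha> ** cmat (jac A (q t))
             + (1/2) *\<^sub>R cmat (hessA_dot A (q t) (p t)))"
    and gamma_ode: "\<forall>t\<in>{0..T}. vector_derivative \<gamma>2 (at t within {0..T})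
        = of_real ((1/2) * (norm (p t))\<^sup>2 - U (q t)) + \<i> * of_real \<epsilon> * of_real (trace (\<alpha>R t))"
    and B_ode: "\<forall>t\<in>{0..T}. vector_derivative B (at t within {0..T})
        = (-2) *\<^sub>R (B t ** \<alpha>R t) + B t ** jac A (q t)"
    and B_inv: "\<forall>t\<in>{0..T}. invertible (B t)"
    and w_def: "\<forall>\<eta>. \<forall>t\<in>{0..T}.
        w \<eta> t = (let \<xi> = sqrt \<epsilon> *\<^sub>R (matrix_inv (B t) *v \<eta>) in
          \<psi> (q t + \<xi>) t
          * exp (- (\<i> / of_real \<epsilon>) * (of_real (\<xi> \<bullet> (\<alpha>R t *v \<xi>) + p t \<bullet> \<xi>) + \<gamma>2 t)))"
begin

abbreviation \<kappa> :: complex where "\<kappa> \<equiv> - (\<i> / of_real \<epsilon>)"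

definition offset :: "real^'n \<Rightarrow> real \<Rightarrow> real^'n" where
  "offset \<eta> t = sqrt \<epsilon> *\<^sub>R (matrix_inv (B t) *v \<eta>)"

definition offset_rate :: "real^'n \<Rightarrow> real \<Rightarrow> real^'n" where
  "offset_rate \<eta> t = 2 *\<^sub>R (\<alpha>R t *v offset \<eta> t) - jac A (q t) *v offset \<eta> t"

definition phase_rate :: "real^'n \<Rightarrow> real \<Rightarrow> real" where
  "phase_rate \<eta> t = (let \<xi> = offset \<eta> t; \<xi>' = offset_rate \<eta> t in
     \<xi>' \<bullet> (\<alpha>R t *v \<xi>) + \<xi> \<bullet> (vector_derivative \<alpha>R (at t within {0..T}) *v \<xi> + \<alpha>R t *v \<xi>')
     + (transpose (jac A (q t)) *v p t - grad U (q t)) \<bullet> \<xi> + p t \<bullet> \<xi>')"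

definition W :: "real \<Rightarrow> real^'n \<Rightarrow> complex" where
  "W t y = \<psi> y t * phase_factor \<kappa> (\<alpha>R t) (q t) (p t) (\<gamma>2 t) y"

lemma aR_transpose: "t \<in> {0..T} \<Longrightarrow> transpose (\<alpha>R t) = \<alpha>R t"
  using aR_sym by (simp add: symmetric_mat_def)

lemma psi_differentiable:
  "t \<in> {0..T} \<Longrightarrow> (\<lambda>(x, t). \<psi> x t) differentiable at (x, t) within (UNIV \<times> {0..T})"
  using C_inf_on_differentiable_on[OF psi_smooth] differentiable_on_def by blast

lemma psi_slice_has_derivative:
  "t \<in> {0..T} \<Longrightarrow> ((\<lambda>y. \<psi> y t) has_derivative
     (\<lambda>v. frechet_derivative (\<lambda>(x, t). \<psi> x t) (at (x, t) within UNIV \<times> {0..T}) (v, 0))) (at x)"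
  using has_derivative_space_slice[OF psi_differentiable, of t x] by simp

lemma psi_slice_differentiable: "t \<in> {0..T} \<Longrightarrow> (\<lambda>y. \<psi> y t) differentiable at x"
  using psi_slice_has_derivative differentiable_def by blast

lemma pdx_psi_slice_differentiable:
  assumes t: "t \<in> {0..T}"
  shows "pdx j (\<lambda>y. \<psi> y t) differentiable at x"
proof -
  let ?P = "pd_within (UNIV \<times> {0..T}) (axis j 1, 0) (\<lambda>(x, t). \<psi> x t)"
  have "(axis j 1 :: real^'n, 0::real) \<in> Basis"
    by (simp add: Basis_prod_def)
  then have "?P differentiable at (y, t) within (UNIV \<times> {0..T})" for y
    using C_inf_on_pd_within_differentiable_on[OF psi_smooth] t differentiable_on_def by blast
  moreover have "pdx j (\<lambda>y. \<psi> y t) = (\<lambda>y. ?P (y, t))"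
    using pdx_eq[OF psi_slice_has_derivative[OF t]] by (auto simp: pd_within_def)
  ultimately show ?thesis
    using has_derivative_space_slice t differentiable_def by metis
qed

lemma W_differentiable: "t \<in> {0..T} \<Longrightarrow> W t differentiable at y"
  unfolding W_def using psi_slice_differentiable differentiable_phase_factor
  by (intro differentiable_mult) auto

lemma pdx_W:
  "t \<in> {0..T} \<Longrightarrow> pdx a (W t) y = (pdx a (\<lambda>y. \<psi> y t) y
     + \<kappa> * of_real (quad_phase_grad (\<alpha>R t) (q t) (p t) y $ a) * \<psi> y t)
     * phase_factor \<kappa> (\<alpha>R t) (q t) (p t) (\<gamma>2 t) y"
  unfolding W_def[abs_def]
  using pdx_mult_phase_factor[OF aR_transpose psi_slice_differentiable] by blast

lemma pdx_W_differentiable: "t \<in> {0..T} \<Longrightarrow> pdx a (W t) differentiable at y"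
  unfolding W_def[abs_def]
  using differentiable_pdx_mult_phase_factor[OF aR_transpose psi_slice_differentiable
      pdx_psi_slice_differentiable] by blast

lemma pdx_pdx_W:
  "t \<in> {0..T} \<Longrightarrow> pdx a (pdx a (W t)) y
     = (pdx a (pdx a (\<lambda>y. \<psi> y t)) y + \<kappa> * of_real (2 * \<alpha>R t $ a $ a) * \<psi> y t
         + \<kappa> * of_real (quad_phase_grad (\<alpha>R t) (q t) (p t) y $ a) * pdx a (\<lambda>y. \<psi> y t) y)
       * phase_factor \<kappa> (\<alpha>R t) (q t) (p t) (\<gamma>2 t) y
     + (pdx a (\<lambda>y. \<psi> y t) y + \<kappa> * of_real (quad_phase_grad (\<alpha>R t) (q t) (p t) y $ a) * \<psi> y t)
       * (\<kappa> * of_real (quad_phase_grad (\<alpha>R t) (q t) (p t) y $ a)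
          * phase_factor \<kappa> (\<alpha>R t) (q t) (p t) (\<gamma>2 t) y)"
  unfolding W_def[abs_def]
  using pdx_pdx_mult_phase_factor[OF aR_transpose psi_slice_differentiable
      pdx_psi_slice_differentiable] by blast

lemma offset_eq_matrix: "offset \<eta> t = (sqrt \<epsilon> *\<^sub>R matrix_inv (B t)) *v \<eta>"
  unfolding offset_def by (simp add: scaleR_matrix_vector_assoc)

lemma w_eq_W: "t \<in> {0..T} \<Longrightarrow> w \<eta> t = W t (q t + offset \<eta> t)"
  using w_def unfolding W_def phase_factor_def quad_phase_def offset_def Let_def by simp

lemma scaled_inverse_mult:
  assumes "t \<in> {0..T}"
  shows "(sqrt \<epsilon> *\<^sub>R matrix_inv (B t)) ** B t = sqrt \<epsilon> *\<^sub>R mat 1"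
  using matrix_inv_left[OF B_inv[rule_format, OF assms]] by (simp add: scalar_matrix_assoc[symmetric])

lemma trace_hess_w:
  assumes t: "t \<in> {0..T}"
  shows "trace (cmat (transpose (B t)) ** hess (\<lambda>\<zeta>. w \<zeta> t) \<eta> ** cmat (B t))
       = of_real \<epsilon> * (\<Sum>a\<in>UNIV. pdx a (pdx a (W t)) (q t + offset \<eta> t))"
proof -
  let ?M = "sqrt \<epsilon> *\<^sub>R matrix_inv (B t)"
  have "hess (\<lambda>\<zeta>. w \<zeta> t) \<eta> = cmat (transpose ?M) ** hess (W t) (q t + offset \<eta> t) ** cmat ?M"
    unfolding w_eq_W[OF t] offset_eq_matrix
    using hess_affine_comp W_differentiable pdx_W_differentiable t by blast
  then show ?thesis
    using trace_cmat_congruence[OF scaled_inverse_mult[OF t]] eps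
    by (simp add: trace_def hess_def)
qed

lemma gradient_w_pairing:
  assumes t: "t \<in> {0..T}"
  shows "1 / of_real (sqrt \<epsilon>) * (\<Sum>j\<in>UNIV. pdx j (\<lambda>\<zeta>. w \<zeta> t) \<eta> * of_real ((B t *v v) $ j))
       = (\<Sum>a\<in>UNIV. pdx a (W t) (q t + offset \<eta> t) * of_real (v $ a))"
proof -
  let ?M = "sqrt \<epsilon> *\<^sub>R matrix_inv (B t)"
  have "pdx j (\<lambda>\<zeta>. w \<zeta> t) \<eta> = (\<Sum>a\<in>UNIV. ?M $ a $ j *\<^sub>R pdx a (W t) (q t + offset \<eta> t))" for j
    unfolding w_eq_W[OF t] offset_eq_matrix using pdx_affine_comp W_differentiable t by blast
  moreover have "?M *v (B t *v v) = sqrt \<epsilon> *\<^sub>R v"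
    using scaled_inverse_mult[OF t]
    by (simp add: matrix_vector_mul_assoc scaleR_matrix_vector_assoc[symmetric])
  ultimately have "(\<Sum>j\<in>UNIV. pdx j (\<lambda>\<zeta>. w \<zeta> t) \<eta> * of_real ((B t *v v) $ j))
      = (\<Sum>a\<in>UNIV. pdx a (W t) (q t + offset \<eta> t) * of_real ((sqrt \<epsilon> *\<^sub>R v) $ a))"
    by (simp only: sum_pdx_affine_pairing)
  then show ?thesis
    using eps by (simp add: sum_distrib_left field_simps)
qed

lemma offset_has_vector_derivative:
  assumes t: "t \<in> {0..T}"
  shows "((\<lambda>s. offset \<eta> s) has_vector_derivative offset_rate \<eta> t) (at t within {0..T})"
proof -
  let ?Bi = "matrix_inv (B t)" and ?B' = "(-2) *\<^sub>R (B t ** \<alpha>R t) + B t ** jac A (q t)"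
  have BiB': "?Bi ** ?B' = (-2) *\<^sub>R \<alpha>R t + jac A (q t)"
    unfolding matrix_add_ldistrib matrix_scalar_ac scalar_matrix_assoc[symmetric] matrix_mul_assoc
      matrix_inv_left[OF B_inv[rule_format, OF t]]
    by simp
  have "(B has_vector_derivative ?B') (at t within {0..T})"
    using C_inf_on_has_vector_derivative[OF B_smooth t] B_ode t by simp
  then have "((\<lambda>s. sqrt \<epsilon> *\<^sub>R (matrix_inv (B s) *v \<eta>)) has_vector_derivative
      sqrt \<epsilon> *\<^sub>R - (?Bi *v (?B' *v (?Bi *v \<eta>)))) (at t within {0..T})"
    using Tpos t B_inv
    by (intro bounded_linear.has_vector_derivative[OF bounded_linear_scaleR_right]
        has_vector_derivative_matrix_inv_apply) auto
  moreover have "?Bi *v (?B' *v v) = (-2) *\<^sub>R (\<alpha>R t *v v) + jac A (q t) *v v" for v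
    unfolding matrix_vector_mul_assoc BiB'
    by (simp add: matrix_vector_mult_add_rdistrib matrix_vector_mult_diff_rdistrib
        scaleR_matrix_vector_assoc[symmetric])
  ultimately show ?thesis
    unfolding offset_def[abs_def] offset_rate_def
    by (simp add: matrix_vector_mult_scaleR scaleR_diff_right mult.commute)
qed

lemma phase_has_vector_derivative:
  assumes t: "t \<in> {0..T}"
  shows "((\<lambda>s. offset \<eta> s \<bullet> (\<alpha>R s *v offset \<eta> s) + p s \<bullet> offset \<eta> s) has_vector_derivative
          phase_rate \<eta> t) (at t within {0..T})"
proof -
  note d\<xi> = offset_has_vector_derivative[OF t]
  have dR: "(\<alpha>R has_vector_derivative vector_derivative \<alpha>R (at t within {0..T})) (at t within {0..T})"
    using C_inf_on_has_vector_derivative[OF aR_smooth t] .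
  have dp: "(p has_vector_derivative transpose (jac A (q t)) *v p t - grad U (q t)) (at t within {0..T})"
    using C_inf_on_has_vector_derivative[OF p_smooth t] p_ode t by simp
  show ?thesis
    unfolding phase_rate_def Let_def
    by (rule has_vector_derivative_eq_rhs,
        rule has_vector_derivative_add[OF
          bounded_bilinear.has_vector_derivative[OF bounded_bilinear_inner d\<xi>
            has_vector_derivative_matrix_vector_mult[OF dR d\<xi>]]
          bounded_bilinear.has_vector_derivative[OF bounded_bilinear_inner dp d\<xi>]])
      (simp add: inner_add_right inner_commute)
qed

lemma psi_has_vector_derivative_along:
  assumes t: "t \<in> {0..T}" and dX: "(X has_vector_derivative X') (at t within {0..T})"
  shows "((\<lambda>s. \<psi> (X s) s) has_vector_derivative
           (\<Sum>a\<in>UNIV. X' $ a *\<^sub>R pdx a (\<lambda>y. \<psi> y t) (X t))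
           + vector_derivative (\<lambda>s. \<psi> (X t) s) (at t within {0..T})) (at t within {0..T})"
proof -
  let ?D = "frechet_derivative (\<lambda>(x, t). \<psi> x t) (at (X t, t) within UNIV \<times> {0..T})"
  have "((\<lambda>s. \<psi> (X t) s) has_vector_derivative ?D (0, 1)) (at t within {0..T})"
    using has_vector_derivative_along_curve[OF psi_differentiable[OF t], of "\<lambda>s. X t" 0] by simp
  from vector_derivative_within_closed_interval[OF Tpos t this]
  have "?D (0, 1) = vector_derivative (\<lambda>s. \<psi> (X t) s) (at t within {0..T})"
    by simp
  moreover have "?D (X', 0) = (\<Sum>a\<in>UNIV. X' $ a *\<^sub>R pdx a (\<lambda>y. \<psi> y t) (X t))"
    using frechet_derivative_eq_sum_pdx[OF psi_slice_differentiable[OF t]]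
      frechet_derivative_at[OF psi_slice_has_derivative[OF t]] by metis
  ultimately show ?thesis
    using has_vector_derivative_along_curve[OF psi_differentiable[OF t] dX]
      frechet_derivative_Pair_split[OF psi_differentiable[OF t], of "X t" X' 1] by simp
qed

lemma w_time_derivative:
  fixes \<eta> :: "real^'n"
  assumes t: "t \<in> {0..T}"
  defines "x \<equiv> q t + offset \<eta> t"
  shows "vector_derivative (\<lambda>s. w \<eta> s) (at t within {0..T})
    = ((\<Sum>a\<in>UNIV. (p t - A (q t) + offset_rate \<eta> t) $ a *\<^sub>R pdx a (\<lambda>y. \<psi> y t) x)
        + vector_derivative (\<lambda>s. \<psi> x s) (at t within {0..T})) * phase_factor \<kappa> (\<alpha>R t) (q t) (p t) (\<gamma>2 t) x
      + \<psi> x t * (phase_factor \<kappa> (\<alpha>R t) (q t) (p t) (\<gamma>2 t) x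
          * (\<kappa> * (of_real (phase_rate \<eta> t) + vector_derivative \<gamma>2 (at t within {0..T}))))"
proof -
  let ?X = "\<lambda>s. q s + offset \<eta> s"
  let ?E = "\<lambda>s. exp (\<kappa> * (of_real (offset \<eta> s \<bullet> (\<alpha>R s *v offset \<eta> s) + p s \<bullet> offset \<eta> s) + \<gamma>2 s))"
  define \<Psi>' where "\<Psi>' = (\<Sum>a\<in>UNIV. (p t - A (q t) + offset_rate \<eta> t) $ a *\<^sub>R pdx a (\<lambda>y. \<psi> y t) x)
      + vector_derivative (\<lambda>s. \<psi> x s) (at t within {0..T})"
  define E' where "E' = \<kappa> * (of_real (phase_rate \<eta> t) + vector_derivative \<gamma>2 (at t within {0..T}))"
  have "(?X has_vector_derivative p t - A (q t) + offset_rate \<eta> t) (at t within {0..T})"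
    using has_vector_derivative_add[OF C_inf_on_has_vector_derivative[OF q_smooth t]
        offset_has_vector_derivative[OF t]] q_ode t by simp
  from psi_has_vector_derivative_along[OF t this]
  have "((\<lambda>s. \<psi> (?X s) s) has_vector_derivative \<Psi>') (at t within {0..T})"
    unfolding \<Psi>'_def x_def .
  moreover have "(?E has_vector_derivative ?E t * E') (at t within {0..T})"
    unfolding E'_def
    by (intro has_vector_derivative_exp_comp bounded_linear.has_vector_derivative[OF bounded_linear_mult_right]
        has_vector_derivative_add bounded_linear.has_vector_derivative[OF bounded_linear_of_real]
        phase_has_vector_derivative[OF t] C_inf_on_has_vector_derivative[OF g_smooth t])
  ultimately have "((\<lambda>s. \<psi> (?X s) s * ?E s) has_vector_derivative \<psi> x t * (?E t * E') + \<Psi>' * ?E t)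
      (at t within {0..T})"
    using has_vector_derivative_mult x_def by fastforce
  moreover have "w \<eta> s = \<psi> (?X s) s * ?E s" if "s \<in> {0..T}" for s
    using w_def that unfolding offset_def Let_def by simp
  ultimately have "((\<lambda>s. w \<eta> s) has_vector_derivative \<psi> x t * (?E t * E') + \<Psi>' * ?E t)
      (at t within {0..T})"
    using has_vector_derivative_transform_within[OF _ zero_less_one t] by fastforce
  moreover have "?E t = phase_factor \<kappa> (\<alpha>R t) (q t) (p t) (\<gamma>2 t) x"
    unfolding phase_factor_def quad_phase_def x_def by simp
  ultimately show ?thesis
    using vector_derivative_within_closed_interval[OF Tpos t] unfolding \<Psi>'_def E'_def
    by (simp add: add.commute)
qed

lemma aR_derivative:
  assumes t: "t \<in> {0..T}"
  shows "vector_derivative \<alpha>R (at t within {0..T})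
    = (-2) *\<^sub>R (\<alpha>R t ** \<alpha>R t - \<alpha>I t ** \<alpha>I t) - (1/2) *\<^sub>R hess U (q t)
      + transpose (jac A (q t)) ** \<alpha>R t + \<alpha>R t ** jac A (q t) + (1/2) *\<^sub>R hessA_dot A (q t) (p t)"
  using Re_riccati[OF Tpos t C_inf_on_has_vector_derivative[OF aR_smooth t]
      C_inf_on_has_vector_derivative[OF aI_smooth t]] alpha_ode t by blast

lemma phase_rate_balance:
  fixes \<eta> :: "real^'n"
  assumes t: "t \<in> {0..T}"
  defines "\<xi> \<equiv> offset \<eta> t" and "a1 \<equiv> A1 A (q t) (offset \<eta> t)"
    and "r \<equiv> quad_phase_grad (\<alpha>R t) (q t) (p t) (q t + offset \<eta> t)"
  shows "phase_rate \<eta> t + ((1/2) * (norm (p t))\<^sup>2 - U (q t)) + U (q t + \<xi>)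
       = (1/2) * (r \<bullet> r) + 2 * (\<xi> \<bullet> ((\<alpha>I t ** \<alpha>I t) *v \<xi>)) + r \<bullet> a1
         + (Ur U (q t) \<xi> - 2 * (a1 \<bullet> (\<alpha>R t *v \<xi>)) - Ar A (q t) \<xi> \<bullet> p t)"
proof -
  have \<xi>': "offset_rate \<eta> t = 2 *\<^sub>R (\<alpha>R t *v \<xi>) - jac A (q t) *v \<xi>"
    unfolding offset_rate_def \<xi>_def ..
  have a1: "a1 = A (\<xi> + q t) - A (q t) - jac A (q t) *v \<xi>"
    unfolding a1_def A1_def \<xi>_def ..
  have r: "r = 2 *\<^sub>R (\<alpha>R t *v \<xi>) + p t"
    unfolding r_def quad_phase_grad_def \<xi>_def by simp
  show ?thesis
    using real_phase_balance[where gU = "grad U (q t)", OF aR_transpose[OF t] \<xi>' aR_derivative[OF t]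
        refl a1 inner_Aq refl r]
    unfolding phase_rate_def Let_def Ar_def Ur_def \<xi>_def a1_def[symmetric]
    by (simp add: add.commute add.left_commute inner_add_right)
qed

lemma w_equation:
  assumes t: "t \<in> {0..T}"
  shows "let \<xi> = sqrt \<epsilon> *\<^sub>R (matrix_inv (B t) *v \<eta>);
         a1 = A1 A (q t) \<xi>;
         Bi = matrix_inv (B t) in
    vector_derivative (\<lambda>s. w \<eta> s) (at t within {0..T})
    = \<i> / 2 * trace (cmat (transpose (B t)) ** hess (\<lambda>\<zeta>. w \<zeta> t) \<eta> ** cmat (B t))
      - 2 * \<i> * of_real (\<eta> \<bullet> ((matrix_inv (transpose (B t)) ** \<alpha>I t ** \<alpha>I t ** Bi) *v \<eta>)) * w \<eta> t
      + 1 / of_real (sqrt \<epsilon>) * (\<Sum>j\<in>UNIV. pdx j (\<lambda>\<zeta>. w \<zeta> t) \<eta> * of_real ((B t *v a1) $ j))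
      + 1 / (\<i> * of_real \<epsilon>) * of_real (Ur U (q t) \<xi> - 2 * sqrt \<epsilon> * (a1 \<bullet> (\<alpha>R t *v (Bi *v \<eta>)))
                                          - Ar A (q t) \<xi> \<bullet> p t) * w \<eta> t"
proof -
  define \<zeta> where "\<zeta> = matrix_inv (B t) *v \<eta>"
  define \<xi> where "\<xi> = offset \<eta> t"
  define x where "x = q t + \<xi>"
  define a1 where "a1 = A1 A (q t) \<xi>"
  define r where "r = quad_phase_grad (\<alpha>R t) (q t) (p t) x"
  define Q where "Q = \<zeta> \<bullet> ((\<alpha>I t ** \<alpha>I t) *v \<zeta>)"
  define Z where "Z = Ur U (q t) \<xi> - 2 * (a1 \<bullet> (\<alpha>R t *v \<xi>)) - Ar A (q t) \<xi> \<bullet> p t"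
  have \<xi>: "sqrt \<epsilon> *\<^sub>R (matrix_inv (B t) *v \<eta>) = \<xi>"
    unfolding \<xi>_def offset_def ..
  have "matrix_inv (transpose (B t)) ** \<alpha>I t ** \<alpha>I t ** matrix_inv (B t)
      = transpose (matrix_inv (B t)) ** ((\<alpha>I t ** \<alpha>I t) ** matrix_inv (B t))"
    unfolding matrix_inv_transpose[OF B_inv[rule_format, OF t]] by (simp add: matrix_mul_assoc)
  then have Q: "\<eta> \<bullet> ((matrix_inv (transpose (B t)) ** \<alpha>I t ** \<alpha>I t ** matrix_inv (B t)) *v \<eta>) = Q"
    unfolding Q_def \<zeta>_def
    by (simp only: matrix_vector_mul_assoc[symmetric] inner_transpose_matrix_vector)
  have Z: "2 * sqrt \<epsilon> * (a1 \<bullet> (\<alpha>R t *v (matrix_inv (B t) *v \<eta>))) = 2 * (a1 \<bullet> (\<alpha>R t *v \<xi>))"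
    unfolding \<xi>[symmetric] by (simp add: matrix_vector_mult_scaleR)
  have schr: "\<i> * of_real \<epsilon> * vector_derivative (\<lambda>s. \<psi> x s) (at t within {0..T})
      = - of_real (\<epsilon>\<^sup>2 / 2) * (\<Sum>a\<in>UNIV. pdx a (pdx a (\<lambda>y. \<psi> y t)) x)
        + \<i> * of_real \<epsilon> * (\<Sum>j\<in>UNIV. of_real (A x $ j) * pdx j (\<lambda>y. \<psi> y t) x) + of_real (U x) * \<psi> x t"
    using schroedinger t unfolding laplacian_def by blast
  have vec: "(p t - A (q t) + offset_rate \<eta> t) + A x = r + a1"
    unfolding r_def quad_phase_grad_def a1_def A1_def offset_rate_def x_def \<xi>_def
    by (simp add: algebra_simps)
  have "\<xi> \<bullet> ((\<alpha>I t ** \<alpha>I t) *v \<xi>) = \<epsilon> * Q"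
    unfolding \<xi>[symmetric] Q_def \<zeta>_def using eps by (simp add: matrix_vector_mult_scaleR)
  then have real: "phase_rate \<eta> t + ((1/2) * (norm (p t))\<^sup>2 - U (q t)) + U x
      = (1/2) * (r \<bullet> r) + 2 * (\<epsilon> * Q) + r \<bullet> a1 + Z"
    using phase_rate_balance[OF t, of \<eta>]
    unfolding Z_def r_def x_def a1_def \<xi>_def by simp
  have gd: "vector_derivative \<gamma>2 (at t within {0..T})
      = of_real ((1/2) * (norm (p t))\<^sup>2 - U (q t)) + \<i> * of_real \<epsilon> * of_real (\<Sum>a\<in>UNIV. \<alpha>R t $ a $ a)"
    using gamma_ode t unfolding trace_def by blast
  show ?thesis
    unfolding Let_def \<xi> Q Z a1_def[symmetric] Z_def[symmetric]
      w_time_derivative[OF t] trace_hess_w[OF t] gradient_w_pairing[OF t]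
    unfolding w_eq_W[OF t] pdx_pdx_W[OF t] pdx_W[OF t]
    unfolding W_def \<xi>_def[symmetric] x_def[symmetric] r_def[symmetric]
    by (rule modulated_equation_algebra[OF eps refl schr vec real gd])
qed

end

theorem mainTheorem1:
  fixes \<epsilon> T :: real
    and A :: "real^'n \<Rightarrow> real^'n" and U :: "real^'n \<Rightarrow> real"
    and \<psi> :: "real^'n \<Rightarrow> real \<Rightarrow> complex"
    and q p :: "real \<Rightarrow> real^'n"
    and \<alpha>R \<alpha>I B :: "real \<Rightarrow> real^'n^'n"
    and \<gamma>2 :: "real \<Rightarrow> complex"
    and w :: "real^'n \<Rightarrow> real \<Rightarrow> complex"
  assumes eps: "\<epsilon> > 0" and Tpos: "T > 0"
    and A_smooth: "C_inf_on UNIV A" and U_smooth: "C_inf_on UNIV U"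
    and psi_smooth: "C_inf_on (UNIV \<times> {0..T}) (\<lambda>(x, t). \<psi> x t)"
    and schroedinger: "\<forall>x. \<forall>t\<in>{0..T}.
        \<i> * of_real \<epsilon> * vector_derivative (\<lambda>s. \<psi> x s) (at t within {0..T})
        = - of_real (\<epsilon>\<^sup>2 / 2) * laplacian (\<lambda>y. \<psi> y t) x
          + \<i> * of_real \<epsilon> * (\<Sum>j\<in>UNIV. of_real (A x $ j) * pdx j (\<lambda>y. \<psi> y t) x)
          + of_real (U x) * \<psi> x t"
    and q_smooth: "C_inf_on {0..T} q" and p_smooth: "C_inf_on {0..T} p"
    and aR_smooth: "C_inf_on {0..T} \<alpha>R" and aI_smooth: "C_inf_on {0..T} \<alpha>I"
    and g_smooth: "C_inf_on {0..T} \<gamma>2" and B_smooth: "C_inf_on {0..T} B"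
    and aR_sym: "\<forall>t\<in>{0..T}. symmetric_mat (\<alpha>R t)"
    and aI_sym: "\<forall>t\<in>{0..T}. symmetric_mat (\<alpha>I t)"
    and q_ode: "\<forall>t\<in>{0..T}. vector_derivative q (at t within {0..T}) = p t - A (q t)"
    and p_ode: "\<forall>t\<in>{0..T}. vector_derivative p (at t within {0..T})
        = transpose (jac A (q t)) *v p t - grad U (q t)"
    and alpha_ode: "\<forall>t\<in>{0..T}.
        vector_derivative (\<lambda>s. cplx_mat (\<alpha>R s) (\<alpha>I s)) (at t within {0..T})
        = (let \<alpha> = cplx_mat (\<alpha>R t) (\<alpha>I t) in
             (-2) *\<^sub>R (\<alpha> ** \<alpha>) - (1/2) *\<^sub>R cmat (hess U (q t))
             + cmat (transpose (jac A (q t))) ** \<alpha> + \<alpha> ** cmat (jac A (q t))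
             + (1/2) *\<^sub>R cmat (hessA_dot A (q t) (p t)))"
    and gamma_ode: "\<forall>t\<in>{0..T}. vector_derivative \<gamma>2 (at t within {0..T})
        = of_real ((1/2) * (norm (p t))\<^sup>2 - U (q t)) + \<i> * of_real \<epsilon> * of_real (trace (\<alpha>R t))"
    and B_ode: "\<forall>t\<in>{0..T}. vector_derivative B (at t within {0..T})
        = (-2) *\<^sub>R (B t ** \<alpha>R t) + B t ** jac A (q t)"
    and aI0_pd: "pos_def (\<alpha>I 0)"
    and B0: "B 0 = pos_sqrt (\<alpha>I 0)"
    and B_inv: "\<forall>t\<in>{0..T}. invertible (B t)"
    and w_def: "\<forall>\<eta>. \<forall>t\<in>{0..T}.
        w \<eta> t = (let \<xi> = sqrt \<epsilon> *\<^sub>R (matrix_inv (B t) *v \<eta>) in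
          \<psi> (q t + \<xi>) t
          * exp (- (\<i> / of_real \<epsilon>) * (of_real (\<xi> \<bullet> (\<alpha>R t *v \<xi>) + p t \<bullet> \<xi>) + \<gamma>2 t)))"
  shows "\<forall>\<eta>. \<forall>t\<in>{0..T}.
    (let \<xi> = sqrt \<epsilon> *\<^sub>R (matrix_inv (B t) *v \<eta>);
         a1 = A1 A (q t) \<xi>;
         Bi = matrix_inv (B t) in
    vector_derivative (\<lambda>s. w \<eta> s) (at t within {0..T})
    = \<i> / 2 * trace (cmat (transpose (B t)) ** hess (\<lambda>\<zeta>. w \<zeta> t) \<eta> ** cmat (B t))
      - 2 * \<i> * of_real (\<eta> \<bullet> ((matrix_inv (transpose (B t)) ** \<alpha>I t ** \<alpha>I t ** Bi) *v \<eta>)) * w \<eta> t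
      + 1 / of_real (sqrt \<epsilon>) * (\<Sum>j\<in>UNIV. pdx j (\<lambda>\<zeta>. w \<zeta> t) \<eta> * of_real ((B t *v a1) $ j))
      + 1 / (\<i> * of_real \<epsilon>) * of_real (Ur U (q t) \<xi> - 2 * sqrt \<epsilon> * (a1 \<bullet> (\<alpha>R t *v (Bi *v \<eta>)))
                                          - Ar A (q t) \<xi> \<bullet> p t) * w \<eta> t)"
proof -
  interpret gaussian_frame \<epsilon> T A U \<psi> q p \<alpha>R \<alpha>I B \<gamma>2 w
    using eps Tpos psi_smooth schroedinger q_smooth p_smooth aR_smooth aI_smooth g_smooth B_smooth
      aR_sym q_ode p_ode alpha_ode gamma_ode B_ode B_inv w_def
    by unfold_locales
  show ?thesis
    by (intro allI ballI w_equation)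
qed

end
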